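(* Let $\mathcal B=(\mathcal T,A,p,c)$ be a BMDP with $n=|\mathcal T|$, let $F:[0,\infty]^n\to[0,\infty]^n$ be its fixed-point operator, let $\mathbf c^*\in[0,\infty]^n$ be the vector of optimal expected total costs, and let $\mathbf x^0=\mathbf 0$, $\mathbf x^{k+1}=F(\mathbf x^k)$ for $k\ge 0$. Then: (a) $F$ is monotone (i.e. $\mathbf x\le\mathbf y$ implies $F(\mathbf x)\le F(\mathbf y)$) and continuous (i.e. $F(\lim_k \mathbf y^k)=\lim_k F(\mathbf y^k)$ for every nondecreasing sequence $(\mathbf y^k)$ in $[0,\infty]^n$); consequently $\mathbf 0\le\mathbf x^k\le\mathbf x^{k+1}$ for all $k\ge0$. (b) $\mathbf c^*=F(\mathbf c^* )$. (c) $\mathbf x^k\le\mathbf c^*$ for all $k\ge 0$. (d) For every $\mathbf c'\in[0,\infty]^n$ with $\mathbf c'=F(\mathbf c')$, we have $\mathbf c^*\le\mathbf c'$. (e) $\mathbf c^*=\lim_{k\to\infty}\mathbf x^k$.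
   Context: A branching Markov decision process (BMDP) is a tuple $\mathcal B=(\mathcal T,A,p,c)$ where $\mathcal T$ is a finite set of types, $A$ is a finite set of actions, $p:\mathcal T\times A\to \mathrm{Dist}(\mathcal T^* )$ is a partial function assigning to some pairs $(q,a)$ a probability distribution with finite support over the set $\mathcal T^*$ of finite lists (words) of types, and $c:\mathcal T\times A\to\mathbb R_{>0}$ is a cost function with strictly positive values. $A(q)$ denotes the (nonempty) set of actions $a$ for which $p(q,a)$ is defined. A branching Markov chain (BMC) is a BMDP with $|A(q)|=1$ for every $q$. For a list $\alpha$, $|\alpha|$ is its length and $\alpha_i$ its $i$-th element; $\varepsilon$ is the empty list. Semantics: the BMDP induces an MDP whose states are lists $\alpha\in\mathcal T^*$ (of "entities"). In state $\alpha$ the enabled actions are pairs $(i,a)$ with $1\le i\le|\alpha|$ and $a\in A(\alpha_i)$; taking $(i,a)$ incurs cost $c(\alpha_i,a)$ and moves to $\alpha_1\cdots\alpha_{i-1}\cdot\beta\cdot\alpha_{i+1}\cdots\alpha_{|\alpha|}$ with probability $p(\alpha_i,a)(\beta)$, for each $\beta\in\mathcal T^*$. The state $\varepsilon$ has no actions; once reached, the process stays there forever and incurs no further cost. A strategy maps each finite history (path) to a probability distribution over the actions enabled in its last state; a strategy $\sigma$ and initial state $\alpha$ induce a probability measure on runs. $\mathrm{ETotal}_N(\alpha,\sigma)$ denotes the expected sum of the costs incurred in the first $N$ steps; $\mathrm{ETotal}_*(\alpha,\sigma)=\lim_{N\to\infty}\mathrm{ETotal}_N(\alpha,\sigma)\in[0,\infty]$;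 and $\mathrm{ETotal}_*(\alpha)=\inf_\sigma \mathrm{ETotal}_*(\alpha,\sigma)$ over all strategies. The vector $\mathbf c^*\in[0,\infty]^{\mathcal T}$ is defined by $\mathbf c^*_q=\mathrm{ETotal}_*(q)$ (starting from the one-entity list $q$). The fixed-point operator $F:[0,\infty]^{\mathcal T}\to[0,\infty]^{\mathcal T}$ is $F(\mathbf x)_q=\min_{a\in A(q)}\Big(c(q,a)+\sum_{\alpha\in\mathcal T^*}p(q,a)(\alpha)\sum_{i=1}^{|\alpha|}\mathbf x_{\alpha_i}\Big)$, with conventions $0\cdot\infty=0$ and $r+\infty=\infty$. Vectors are compared componentwise. *)

theory Defs
  imports "HOL-Probability.Probability"
begin

text \<open>A BMDP is given by a partial probability function
  p :: 'q \<Rightarrow> 'a \<Rightarrow> 'q list pmf option  (None = action not enabled)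
  and a cost function c :: 'q \<Rightarrow> 'a \<Rightarrow> real.
  Lists are indexed from 0 (entity i of a list is xs ! i, i < length xs).\<close>

definition bmdp :: "('q::finite \<Rightarrow> 'a::finite \<Rightarrow> 'q list pmf option) \<Rightarrow> ('q \<Rightarrow> 'a \<Rightarrow> real) \<Rightarrow> bool" where
  "bmdp p c \<longleftrightarrow>
     (\<forall>q. \<exists>a. p q a \<noteq> None) \<and>
     (\<forall>q a d. p q a = Some d \<longrightarrow> finite (set_pmf d)) \<and>
     (\<forall>q a. p q a \<noteq> None \<longrightarrow> c q a > 0)"

definition enabled :: "('q \<Rightarrow> 'a \<Rightarrow> 'q list pmf option) \<Rightarrow> 'q \<Rightarrow> 'a set" where
  "enabled p q = {a. p q a \<noteq> None}"

text \<open>Histories (finite paths) of the induced MDP: an initial state followed by a list of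
  (action taken, successor state) pairs. An action of the induced MDP is a pair (i,a).\<close>
type_synonym ('q,'a) hist = "'q list \<times> ((nat \<times> 'a) \<times> 'q list) list"

definition last_state :: "('q,'a) hist \<Rightarrow> 'q list" where
  "last_state h = (if snd h = [] then fst h else snd (last (snd h)))"

definition extend :: "('q,'a) hist \<Rightarrow> (nat \<times> 'a) \<Rightarrow> 'q list \<Rightarrow> ('q,'a) hist" where
  "extend h act s = (fst h, snd h @ [(act, s)])"

definition replace_at :: "'q list \<Rightarrow> nat \<Rightarrow> 'q list \<Rightarrow> 'q list" where
  "replace_at \<alpha> i \<beta> = take i \<alpha> @ \<beta> @ drop (Suc i) \<alpha>"

definition strategy :: "('q \<Rightarrow> 'a \<Rightarrow> 'q list pmf option) \<Rightarrow> (('q,'a) hist \<Rightarrow> (nat \<times> 'a) pmf) \<Rightarrow> bool" where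
  "strategy p \<sigma> \<longleftrightarrow>
     (\<forall>h. last_state h \<noteq> [] \<longrightarrow>
        (\<forall>(i,a) \<in> set_pmf (\<sigma> h). i < length (last_state h) \<and> p (last_state h ! i) a \<noteq> None))"

text \<open>Expected cost of the next N steps, continuing from history h under strategy \<sigma>
  (backward recursion = expectation w.r.t. the induced measure on runs).\<close>
fun ETotalN :: "('q \<Rightarrow> 'a \<Rightarrow> 'q list pmf option) \<Rightarrow> ('q \<Rightarrow> 'a \<Rightarrow> real) \<Rightarrow>
    (('q,'a) hist \<Rightarrow> (nat \<times> 'a) pmf) \<Rightarrow> nat \<Rightarrow> ('q,'a) hist \<Rightarrow> ennreal" where
  "ETotalN p c \<sigma> 0 h = 0"
| "ETotalN p c \<sigma> (Suc N) h =
     (if last_state h = [] then 0 else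
       (\<integral>\<^sup>+ act. (ennreal (c (last_state h ! fst act) (snd act)) +
          (\<integral>\<^sup>+ \<beta>. ETotalN p c \<sigma> N (extend h act (replace_at (last_state h) (fst act) \<beta>))
             \<partial>measure_pmf (the (p (last_state h ! fst act) (snd act)))))
        \<partial>measure_pmf (\<sigma> h)))"

definition ETotal_strat :: "('q \<Rightarrow> 'a \<Rightarrow> 'q list pmf option) \<Rightarrow> ('q \<Rightarrow> 'a \<Rightarrow> real) \<Rightarrow>
    'q list \<Rightarrow> (('q,'a) hist \<Rightarrow> (nat \<times> 'a) pmf) \<Rightarrow> ennreal" where
  "ETotal_strat p c \<alpha> \<sigma> = lim (\<lambda>N. ETotalN p c \<sigma> N (\<alpha>, []))"

definition ETotal :: "('q \<Rightarrow> 'a \<Rightarrow> 'q list pmf option) \<Rightarrow> ('q \<Rightarrow> 'a \<Rightarrow> real) \<Rightarrow> 'q list \<Rightarrow> ennreal" where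
  "ETotal p c \<alpha> = (INF \<sigma> \<in> {\<sigma>. strategy p \<sigma>}. ETotal_strat p c \<alpha> \<sigma>)"

definition cstar :: "('q \<Rightarrow> 'a \<Rightarrow> 'q list pmf option) \<Rightarrow> ('q \<Rightarrow> 'a \<Rightarrow> real) \<Rightarrow> 'q \<Rightarrow> ennreal" where
  "cstar p c q = ETotal p c [q]"

text \<open>The fixed-point operator F. For finitely supported distributions the integral is the
  finite sum of probability times value, with 0 * \<infinity> = 0 in ennreal.\<close>
definition Fop :: "('q \<Rightarrow> 'a \<Rightarrow> 'q list pmf option) \<Rightarrow> ('q \<Rightarrow> 'a \<Rightarrow> real) \<Rightarrow>
    ('q \<Rightarrow> ennreal) \<Rightarrow> ('q \<Rightarrow> ennreal)" where
  "Fop p c x q = Min ((\<lambda>a. ennreal (c q a) +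
        (\<integral>\<^sup>+ \<alpha>. (\<Sum>i<length \<alpha>. x (\<alpha> ! i)) \<partial>measure_pmf (the (p q a)))) ` enabled p q)"

end

(* Monotonicity and continuity of F hold componentwise, F being a minimum of finitely many
   finite sums of expectations. If F x <= x, the strategy that always expands the first entity by
   an action attaining the minimum in F has N-step cost at most the sum of x over the current
   state, so c* <= x. Conversely, the iterate x^k bounds the cost of every strategy from below:
   give the initial entity budget k and the children of an entity with budget b budget b - 1;
   the potential sum of x^b over the entities is then at most the expected N-step cost plus a
   bounded weight times the probability that the process survives N steps. As every step costs
   at least the least cost kappa > 0, a strategy of finite cost S survives N steps with
   probability at most S / (kappa N), so the remainder vanishes. Hence c* is the supremum of the
   x^k, which is the least fixed point of F by continuity. *)

theory Submission
  imports Defs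
begin

type_synonym ('q, 'a) transitions = "'q \<Rightarrow> 'a \<Rightarrow> 'q list pmf option"
type_synonym ('q, 'a) costs = "'q \<Rightarrow> 'a \<Rightarrow> real"
type_synonym ('q, 'a) strat = "('q, 'a) hist \<Rightarrow> (nat \<times> 'a) pmf"

definition action_value ::
  "('q, 'a) transitions \<Rightarrow> ('q, 'a) costs \<Rightarrow> ('q \<Rightarrow> ennreal) \<Rightarrow> 'q \<Rightarrow> 'a \<Rightarrow> ennreal" where
  "action_value p c x q a =
     ennreal (c q a) + (\<integral>\<^sup>+ \<beta>. sum_list (map x \<beta>) \<partial>measure_pmf (the (p q a)))"

lemma Fop_eq_Min_action_value: "Fop p c x q = Min (action_value p c x q ` enabled p q)"
  by (simp add: Fop_def action_value_def sum_list_sum_nth atLeast0LessThan)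

lemma action_value_mono: "x \<le> y \<Longrightarrow> action_value p c x q a \<le> action_value p c y q a"
  unfolding action_value_def
  by (intro add_left_mono nn_integral_mono sum_list_mono) (auto simp: le_fun_def)

lemma tendsto_Min_finite:
  fixes f :: "'b \<Rightarrow> 'i \<Rightarrow> 'c::linorder_topology"
  assumes "finite A" "A \<noteq> {}" "\<And>i. i \<in> A \<Longrightarrow> ((\<lambda>k. f k i) \<longlongrightarrow> l i) F"
  shows "((\<lambda>k. Min (f k ` A)) \<longlongrightarrow> Min (l ` A)) F"
  using assms
proof (induction A rule: finite_ne_induct)
  case (singleton i)
  then show ?case by simp
next
  case (insert i A)
  then have "((\<lambda>k. min (f k i) (Min (f k ` A))) \<longlongrightarrow> min (l i) (Min (l ` A))) F"
    by (intro tendsto_min) auto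
  with insert show ?case by simp
qed

lemma tendsto_action_value:
  fixes Y :: "nat \<Rightarrow> 'q \<Rightarrow> ennreal"
  assumes fin: "finite (set_pmf (the (p q a)))" and Y: "\<And>q. (\<lambda>k. Y k q) \<longlonglongrightarrow> L q"
  shows "(\<lambda>k. action_value p c (Y k) q a) \<longlonglongrightarrow> action_value p c L q a"
proof -
  let ?d = "the (p q a)"
  have "(\<lambda>k. sum_list (map (Y k) \<beta>)) \<longlonglongrightarrow> sum_list (map L \<beta>)" for \<beta>
    by (induction \<beta>) (auto intro!: tendsto_add Y)
  then have "(\<lambda>k. \<Sum>\<beta>\<in>set_pmf ?d. ennreal (pmf ?d \<beta>) * sum_list (map (Y k) \<beta>))
      \<longlonglongrightarrow> (\<Sum>\<beta>\<in>set_pmf ?d. ennreal (pmf ?d \<beta>) * sum_list (map L \<beta>))"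
    by (intro tendsto_sum ennreal_tendsto_cmult) auto
  then show ?thesis
    unfolding action_value_def
    by (intro tendsto_add tendsto_const)
       (simp add: nn_integral_measure_pmf_finite[OF fin] mult.commute)
qed

definition value_iter :: "('q, 'a) transitions \<Rightarrow> ('q, 'a) costs \<Rightarrow> nat \<Rightarrow> 'q \<Rightarrow> ennreal" where
  "value_iter p c k = (Fop p c ^^ k) (\<lambda>_. 0)"

lemma value_iter_0 [simp]: "value_iter p c 0 q = 0"
  by (simp add: value_iter_def)

lemma value_iter_Suc: "value_iter p c (Suc k) = Fop p c (value_iter p c k)"
  by (simp add: value_iter_def)

lemma last_state_initial [simp]: "last_state (\<alpha>, []) = \<alpha>"
  by (simp add: last_state_def)

lemma last_state_extend [simp]: "last_state (extend h act s) = s"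
  by (simp add: last_state_def extend_def)

lemma map_replace_at: "map f (replace_at xs i ys) = replace_at (map f xs) i (map f ys)"
  by (simp add: replace_at_def take_map drop_map)

lemma sum_list_replace_at:
  fixes f :: "'b \<Rightarrow> 'c::comm_monoid_add"
  assumes "i < length xs"
  shows "sum_list (map f (replace_at xs i ys)) + f (xs ! i)
    = sum_list (map f xs) + sum_list (map f ys)"
proof -
  have "xs = take i xs @ xs ! i # drop (Suc i) xs"
    using assms by (simp add: id_take_nth_drop)
  then have "sum_list (map f xs)
      = sum_list (map f (take i xs)) + f (xs ! i) + sum_list (map f (drop (Suc i) xs))"
    by (metis add.assoc list.simps(9) map_append sum_list.Cons sum_list_append)
  then show ?thesis
    by (simp add: replace_at_def add_ac)
qed

lemma nn_integral_pmf_add_const: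
  "(\<integral>\<^sup>+ x. f x + (k::ennreal) \<partial>measure_pmf d) = (\<integral>\<^sup>+ x. f x \<partial>measure_pmf d) + k"
  by (simp add: nn_integral_add measure_pmf.emeasure_space_1)

lemma strategyD:
  assumes "strategy p \<sigma>" "last_state h \<noteq> []" "act \<in> set_pmf (\<sigma> h)"
  shows "fst act < length (last_state h)" "p (last_state h ! fst act) (snd act) \<noteq> None"
  using assms unfolding strategy_def by (cases act; fastforce)+

lemma ETotalN_le_Suc: "ETotalN p c \<sigma> N h \<le> ETotalN p c \<sigma> (Suc N) h"
proof (induction N arbitrary: h)
  case 0
  then show ?case by simp
next
  case (Suc N)
  show ?case
    by (subst ETotalN.simps(2)[of p c \<sigma> N], subst ETotalN.simps(2)[of p c \<sigma> "Suc N"])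
       (auto simp del: ETotalN.simps intro!: nn_integral_mono add_left_mono Suc.IH)
qed

lemma ETotal_strat_eq_SUP: "ETotal_strat p c \<alpha> \<sigma> = (SUP N. ETotalN p c \<sigma> N (\<alpha>, []))"
  unfolding ETotal_strat_def
  by (intro limI LIMSEQ_SUP incseq_SucI ETotalN_le_Suc)

fun survival_prob ::
  "('q, 'a) transitions \<Rightarrow> ('q, 'a) strat \<Rightarrow> nat \<Rightarrow> ('q, 'a) hist \<Rightarrow> ennreal" where
  "survival_prob p \<sigma> 0 h = (if last_state h = [] then 0 else 1)"
| "survival_prob p \<sigma> (Suc N) h =
     (if last_state h = [] then 0 else
       (\<integral>\<^sup>+ act. (\<integral>\<^sup>+ \<beta>. survival_prob p \<sigma> N (extend h act (replace_at (last_state h) (fst act) \<beta>))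
             \<partial>measure_pmf (the (p (last_state h ! fst act) (snd act))))
        \<partial>measure_pmf (\<sigma> h)))"

lemma survival_prob_le_1: "survival_prob p \<sigma> N h \<le> 1"
proof (induction N arbitrary: h)
  case 0
  then show ?case by simp
next
  case (Suc N)
  then show ?case
    by (simp del: survival_prob.simps(1)
        add: measure_pmf.nn_integral_le_const AE_pmfI)
qed

lemma ETotalN_ge_survival_prob:
  assumes "strategy p \<sigma>" "0 \<le> \<kappa>" "\<And>q a. p q a \<noteq> None \<Longrightarrow> \<kappa> \<le> c q a"
  shows "ennreal \<kappa> * of_nat N * survival_prob p \<sigma> N h \<le> ETotalN p c \<sigma> N h"
proof (induction N arbitrary: h)
  case 0
  then show ?case by simp
next
  case (Suc N)
  show ?case
  proof (cases "last_state h = []")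
    case True
    then show ?thesis by simp
  next
    case False
    let ?d = "\<lambda>act. measure_pmf (the (p (last_state h ! fst act) (snd act)))"
    let ?h' = "\<lambda>act \<beta>. extend h act (replace_at (last_state h) (fst act) \<beta>)"
    let ?c = "\<lambda>act. c (last_state h ! fst act) (snd act)"
    have "ennreal \<kappa> * of_nat (Suc N) * (\<integral>\<^sup>+ \<beta>. survival_prob p \<sigma> N (?h' act \<beta>) \<partial>?d act)
        \<le> ennreal (?c act) + (\<integral>\<^sup>+ \<beta>. ETotalN p c \<sigma> N (?h' act \<beta>) \<partial>?d act)"
      if act: "act \<in> set_pmf (\<sigma> h)" for act
    proof -
      define P where "P = (\<integral>\<^sup>+ \<beta>. survival_prob p \<sigma> N (?h' act \<beta>) \<partial>?d act)"
      have "P \<le> 1"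
        unfolding P_def
        by (auto intro!: measure_pmf.nn_integral_le_const AE_pmfI survival_prob_le_1)
      have "\<kappa> \<le> ?c act"
        using strategyD[OF assms(1) False act] assms(3) by simp
      with \<open>P \<le> 1\<close> have "ennreal \<kappa> * P \<le> ennreal (?c act)"
        by (meson ennreal_leI mult_left_le order_trans zero_le)
      have "ennreal \<kappa> * of_nat (Suc N) * P = ennreal \<kappa> * P + ennreal \<kappa> * of_nat N * P"
        by (simp add: algebra_simps)
      also have "\<dots> \<le> ennreal (?c act)
          + (\<integral>\<^sup>+ \<beta>. ennreal \<kappa> * of_nat N * survival_prob p \<sigma> N (?h' act \<beta>) \<partial>?d act)"
        using \<open>ennreal \<kappa> * P \<le> ennreal (?c act)\<close>
        by (intro add_mono) (simp_all add: P_def nn_integral_cmult)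
      also have "\<dots> \<le> ennreal (?c act) + (\<integral>\<^sup>+ \<beta>. ETotalN p c \<sigma> N (?h' act \<beta>) \<partial>?d act)"
        by (intro add_left_mono nn_integral_mono Suc.IH)
      finally show ?thesis
        unfolding P_def .
    qed
    then show ?thesis
      using False by (simp add: nn_integral_cmult[symmetric] nn_integral_mono_AE AE_pmfI)
  qed
qed

(* The remainder D * P N vanishes since P N <= S / (kappa * N). *)
lemma ennreal_le_of_survival_vanishes:
  fixes \<Psi> D S :: ennreal and E P :: "nat \<Rightarrow> ennreal"
  assumes "0 < \<kappa>" "D < \<top>"
    and "\<And>N. \<Psi> \<le> E N + D * P N" "\<And>N. ennreal \<kappa> * of_nat N * P N \<le> E N" "\<And>N. E N \<le> S"
  shows "\<Psi> \<le> S"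
proof (rule ennreal_le_epsilon)
  fix e :: real
  assume "S < \<top>" "0 < e"
  define r where "r = enn2real (D * S)"
  have DS: "D * S = ennreal r"
    using \<open>D < \<top>\<close> \<open>S < \<top>\<close> by (simp add: r_def ennreal_mult_less_top less_top ennreal_enn2real_if)
  obtain N :: nat where N: "r < of_nat N * (e * \<kappa>)"
    using ex_less_of_nat_mult[of "e * \<kappa>" r] \<open>0 < e\<close> \<open>0 < \<kappa>\<close> by auto
  have "0 < N"
    using N enn2real_nonneg[of "D * S"] by (cases N) (auto simp: r_def)
  define K where "K = ennreal \<kappa> * of_nat N"
  have K: "K \<noteq> 0" "K \<noteq> \<top>"
    using \<open>0 < \<kappa>\<close> \<open>0 < N\<close> by (auto simp: K_def ennreal_mult_eq_top_iff of_nat_less_top)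
  have "K * (D * P N) = D * (ennreal \<kappa> * of_nat N * P N)"
    by (simp add: K_def ac_simps)
  also have "\<dots> \<le> D * S"
    using assms(4,5)[of N] by (intro mult_left_mono) auto
  also have "\<dots> \<le> ennreal (of_nat N * (e * \<kappa>))"
    unfolding DS using N by (intro ennreal_leI) simp
  also have "\<dots> = K * ennreal e"
    using \<open>0 < \<kappa>\<close> \<open>0 < e\<close>
    by (simp add: K_def ennreal_of_nat_eq_real_of_nat ennreal_mult[symmetric] ac_simps)
  finally have "D * P N \<le> ennreal e"
    using K by (simp add: ennreal_mult_le_mult_iff)
  then have "\<Psi> \<le> E N + ennreal e"
    using assms(3)[of N] by (meson add_left_mono order_trans)
  also have "\<dots> \<le> S + ennreal e"
    using assms(5) by (rule add_right_mono)
  finally show "\<Psi> \<le> S + ennreal e" .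
qed

definition greedy_action :: "('q, 'a) transitions \<Rightarrow> ('q, 'a) costs \<Rightarrow> ('q \<Rightarrow> ennreal) \<Rightarrow> 'q \<Rightarrow> 'a" where
  "greedy_action p c x q = (SOME a. a \<in> enabled p q \<and> Fop p c x q = action_value p c x q a)"

definition greedy_strategy ::
  "('q, 'a) transitions \<Rightarrow> ('q, 'a) costs \<Rightarrow> ('q \<Rightarrow> ennreal) \<Rightarrow> ('q, 'a) strat" where
  "greedy_strategy p c x h = return_pmf (0, greedy_action p c x (hd (last_state h)))"

definition offspring_bound :: "('q::finite, 'a::finite) transitions \<Rightarrow> nat" where
  "offspring_bound p = (\<Sum>q\<in>UNIV. \<Sum>a\<in>UNIV. case p q a of None \<Rightarrow> 0 | Some d \<Rightarrow> \<Sum>\<beta>\<in>set_pmf d. length \<beta>)"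

fun level_weight :: "('q::finite, 'a::finite) transitions \<Rightarrow> ('q, 'a) costs \<Rightarrow> nat \<Rightarrow> ennreal" where
  "level_weight p c 0 = 0"
| "level_weight p c (Suc k) =
     (\<Sum>q\<in>UNIV. value_iter p c (Suc k) q) + of_nat (offspring_bound p) * level_weight p c k"

definition budget_potential ::
  "('q, 'a) transitions \<Rightarrow> ('q, 'a) costs \<Rightarrow> ('q \<times> nat) list \<Rightarrow> ennreal" where
  "budget_potential p c l = sum_list (map (\<lambda>(q, b). value_iter p c b q) l)"

definition budget_weight ::
  "('q::finite, 'a::finite) transitions \<Rightarrow> ('q, 'a) costs \<Rightarrow> ('q \<times> nat) list \<Rightarrow> ennreal" where
  "budget_weight p c l = sum_list (map (\<lambda>(q, b). level_weight p c b) l)"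

definition relabel :: "('q \<times> nat) list \<Rightarrow> nat \<Rightarrow> 'q list \<Rightarrow> ('q \<times> nat) list" where
  "relabel l i \<beta> = replace_at l i (map (\<lambda>q. (q, snd (l ! i) - 1)) \<beta>)"

lemma value_iter_le_level_weight: "value_iter p c k q \<le> level_weight p c k"
  by (cases k) (auto intro!: add_increasing2 member_le_sum)

lemma offspring_bound_mult_level_weight_le:
  "of_nat (offspring_bound p) * level_weight p c (k - 1) \<le> level_weight p c k"
  by (cases k) auto

lemma map_fst_relabel: "map fst (relabel l i \<beta>) = replace_at (map fst l) i \<beta>"
  by (simp add: relabel_def map_replace_at comp_def)

context
  fixes p :: "('q::finite, 'a::finite) transitions" and c :: "('q, 'a) costs"
  assumes bmdp: "bmdp p c"
begin

lemma enabled_nonempty: "enabled p q \<noteq> {}"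
  using bmdp by (auto simp: bmdp_def enabled_def)

lemma finite_set_pmf_action: "p q a = Some d \<Longrightarrow> finite (set_pmf d)"
  using bmdp by (auto simp: bmdp_def)

lemma Fop_le_action_value: "a \<in> enabled p q \<Longrightarrow> Fop p c x q \<le> action_value p c x q a"
  unfolding Fop_eq_Min_action_value by (intro Min_le) auto

lemma Fop_attained: "\<exists>a\<in>enabled p q. Fop p c x q = action_value p c x q a"
proof -
  have "Min (action_value p c x q ` enabled p q) \<in> action_value p c x q ` enabled p q"
    using enabled_nonempty by (intro Min_in) auto
  then show ?thesis
    unfolding Fop_eq_Min_action_value by auto
qed

lemma Fop_mono: "x \<le> y \<Longrightarrow> Fop p c x \<le> Fop p c y"
proof (rule le_funI)
  fix q
  assume "x \<le> y"
  obtain a where a: "a \<in> enabled p q" "Fop p c y q = action_value p c y q a"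
    using Fop_attained by blast
  have "Fop p c x q \<le> action_value p c x q a"
    using a(1) by (rule Fop_le_action_value)
  also have "\<dots> \<le> Fop p c y q"
    using \<open>x \<le> y\<close> a(2) by (simp add: action_value_mono)
  finally show "Fop p c x q \<le> Fop p c y q" .
qed

lemma tendsto_Fop:
  assumes "\<And>q. (\<lambda>k. Y k q) \<longlonglongrightarrow> L q"
  shows "(\<lambda>k. Fop p c (Y k) q) \<longlonglongrightarrow> Fop p c L q"
  unfolding Fop_eq_Min_action_value
proof (rule tendsto_Min_finite[OF finite enabled_nonempty])
  fix a
  assume "a \<in> enabled p q"
  then have "finite (set_pmf (the (p q a)))"
    by (auto simp: enabled_def intro: finite_set_pmf_action)
  then show "(\<lambda>k. action_value p c (Y k) q a) \<longlonglongrightarrow> action_value p c L q a"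
    using assms by (rule tendsto_action_value)
qed

lemma incseq_value_iter: "incseq (value_iter p c)"
proof (rule incseq_SucI)
  show "value_iter p c k \<le> value_iter p c (Suc k)" for k
  proof (induction k)
    case 0
    then show ?case by (simp add: le_fun_def)
  next
    case (Suc k)
    then show ?case by (simp only: value_iter_Suc Fop_mono)
  qed
qed

lemma value_iter_le_action_value:
  "a \<in> enabled p q \<Longrightarrow> value_iter p c k q \<le> action_value p c (value_iter p c (k - 1)) q a"
  by (cases k) (simp_all add: value_iter_Suc Fop_le_action_value)

lemma value_iter_less_top: "value_iter p c k q < \<top>"
proof (induction k arbitrary: q)
  case 0
  then show ?case by simp
next
  case (Suc k)
  obtain a where a: "a \<in> enabled p q"
    using enabled_nonempty by blast
  then obtain d where d: "p q a = Some d"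
    by (auto simp: enabled_def)
  have "sum_list (map (value_iter p c k) \<beta>) < \<top>" for \<beta>
    using Suc.IH by (induction \<beta>) auto
  then have "action_value p c (value_iter p c k) q a < \<top>"
    using finite_set_pmf_action[OF d]
    by (simp add: action_value_def d nn_integral_measure_pmf_finite ennreal_mult_less_top)
  then show ?case
    using value_iter_le_action_value[OF a, of "Suc k"] by (simp add: le_less_trans)
qed

lemma greedy_action:
  "greedy_action p c x q \<in> enabled p q"
  "Fop p c x q = action_value p c x q (greedy_action p c x q)"
  using someI_ex[OF Fop_attained[of q x, unfolded Bex_def]] by (auto simp: greedy_action_def)

lemma strategy_greedy_strategy: "strategy p (greedy_strategy p c x)"
  using greedy_action(1) by (auto simp: strategy_def greedy_strategy_def enabled_def hd_conv_nth)

lemma ETotalN_greedy_strategy_le: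
  assumes "Fop p c x \<le> x"
  shows "ETotalN p c (greedy_strategy p c x) N h \<le> sum_list (map x (last_state h))"
proof (induction N arbitrary: h)
  case 0
  then show ?case by simp
next
  case (Suc N)
  show ?case
  proof (cases "last_state h")
    case Nil
    then show ?thesis by simp
  next
    case (Cons q rest)
    define a where "a = greedy_action p c x q"
    let ?d = "measure_pmf (the (p q a))"
    have "ETotalN p c (greedy_strategy p c x) (Suc N) h = ennreal (c q a)
        + (\<integral>\<^sup>+ \<beta>. ETotalN p c (greedy_strategy p c x) N (extend h (0, a) (\<beta> @ rest)) \<partial>?d)"
      using Cons by (simp add: greedy_strategy_def a_def replace_at_def)
    also have "\<dots> \<le> ennreal (c q a) + (\<integral>\<^sup>+ \<beta>. sum_list (map x \<beta>) + sum_list (map x rest) \<partial>?d)"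
      using Suc.IH
      by (intro add_left_mono nn_integral_mono) (metis last_state_extend map_append sum_list_append)
    also have "\<dots> = Fop p c x q + sum_list (map x rest)"
      by (simp add: greedy_action(2) a_def action_value_def nn_integral_pmf_add_const add.assoc)
    also have "\<dots> \<le> sum_list (map x (last_state h))"
      using assms Cons by (simp add: le_fun_def add_right_mono)
    finally show ?thesis .
  qed
qed

lemma cstar_le_prefixpoint:
  assumes "Fop p c x \<le> x"
  shows "cstar p c \<le> x"
proof (rule le_funI)
  fix q
  have "cstar p c q \<le> ETotal_strat p c [q] (greedy_strategy p c x)"
    unfolding cstar_def ETotal_def using strategy_greedy_strategy by (intro INF_lower) auto
  also have "\<dots> \<le> x q"
    using ETotalN_greedy_strategy_le[OF assms, of _ "([q], [])"]
    by (auto simp: ETotal_strat_eq_SUP intro!: SUP_least)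
  finally show "cstar p c q \<le> x q" .
qed

lemma level_weight_less_top: "level_weight p c k < \<top>"
  by (induction k) (auto simp: value_iter_less_top ennreal_mult_less_top of_nat_less_top)

lemma length_le_offspring_bound:
  assumes "p q a = Some d" "\<beta> \<in> set_pmf d"
  shows "length \<beta> \<le> offspring_bound p"
proof -
  let ?n = "\<lambda>q a. case p q a of None \<Rightarrow> 0 | Some d \<Rightarrow> \<Sum>\<beta>\<in>set_pmf d. length \<beta>"
  have "length \<beta> \<le> ?n q a"
    using assms finite_set_pmf_action[OF assms(1)] by (simp add: member_le_sum)
  also have "\<dots> \<le> (\<Sum>a\<in>UNIV. ?n q a)"
    by (rule member_le_sum) auto
  also have "\<dots> \<le> offspring_bound p"
    unfolding offspring_bound_def by (rule member_le_sum[of q UNIV "\<lambda>q. \<Sum>a\<in>UNIV. ?n q a"]) auto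
  finally show ?thesis .
qed

lemma budget_potential_step:
  assumes "i < length l" "a \<in> enabled p (fst (l ! i))"
  shows "budget_potential p c l \<le> ennreal (c (fst (l ! i)) a)
    + (\<integral>\<^sup>+ \<beta>. budget_potential p c (relabel l i \<beta>) \<partial>measure_pmf (the (p (fst (l ! i)) a)))"
proof -
  obtain q b where qb: "l ! i = (q, b)"
    by (cases "l ! i")
  let ?d = "measure_pmf (the (p q a))"
  let ?X = "value_iter p c"
  have split: "budget_potential p c (relabel l i \<beta>) + ?X b q
      = sum_list (map (?X (b - 1)) \<beta>) + budget_potential p c l" for \<beta>
    using sum_list_replace_at[OF assms(1), of "\<lambda>(q, b). ?X b q" "map (\<lambda>q. (q, b - 1)) \<beta>"]
    by (simp add: budget_potential_def relabel_def qb comp_def add.commute)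
  have "budget_potential p c l + ?X b q
      \<le> budget_potential p c l + action_value p c (?X (b - 1)) q a"
    using value_iter_le_action_value assms(2) qb by (simp add: add_left_mono)
  also have "\<dots> = ennreal (c q a)
      + (\<integral>\<^sup>+ \<beta>. sum_list (map (?X (b - 1)) \<beta>) + budget_potential p c l \<partial>?d)"
    by (simp add: action_value_def nn_integral_pmf_add_const)
  also have "\<dots> = ennreal (c q a) + (\<integral>\<^sup>+ \<beta>. budget_potential p c (relabel l i \<beta>) \<partial>?d) + ?X b q"
    unfolding split[symmetric] nn_integral_pmf_add_const by (simp add: add_ac)
  finally show ?thesis
    using value_iter_less_top[of b q] qb
    by (auto simp: ennreal_add_left_cancel_le add.commute[of _ "?X b q"])
qed

lemma budget_weight_step:
  assumes "i < length l" "p (fst (l ! i)) a = Some d" "\<beta> \<in> set_pmf d"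
  shows "budget_weight p c (relabel l i \<beta>) \<le> budget_weight p c l"
proof -
  obtain q b where qb: "l ! i = (q, b)"
    by (cases "l ! i")
  let ?w = "level_weight p c"
  have "budget_weight p c (relabel l i \<beta>) + ?w b
      = budget_weight p c l + of_nat (length \<beta>) * ?w (b - 1)"
    using sum_list_replace_at[OF assms(1), of "\<lambda>(q, b). ?w b" "map (\<lambda>q. (q, b - 1)) \<beta>"]
    by (simp add: budget_weight_def relabel_def qb comp_def sum_list_triv)
  also have "\<dots> \<le> budget_weight p c l + ?w b"
  proof (rule add_left_mono)
    have "of_nat (length \<beta>) * ?w (b - 1) \<le> of_nat (offspring_bound p) * ?w (b - 1)"
      using length_le_offspring_bound[OF assms(2,3)] by (intro mult_right_mono) simp_all
    also have "\<dots> \<le> ?w b"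
      by (rule offspring_bound_mult_level_weight_le)
    finally show "of_nat (length \<beta>) * ?w (b - 1) \<le> ?w b" .
  qed
  finally show ?thesis
    using level_weight_less_top[of b]
    by (auto simp: ennreal_add_left_cancel_le add.commute[of _ "?w b"])
qed

lemma budget_potential_le_ETotalN:
  assumes "strategy p \<sigma>" "map fst l = last_state h"
  shows "budget_potential p c l \<le> ETotalN p c \<sigma> N h + budget_weight p c l * survival_prob p \<sigma> N h"
  using assms(2)
proof (induction N arbitrary: h l)
  case 0
  have "budget_potential p c l \<le> budget_weight p c l"
    unfolding budget_potential_def budget_weight_def
    by (intro sum_list_mono) (auto simp: value_iter_le_level_weight)
  with 0 show ?case
    by (cases "l = []") (auto simp: budget_potential_def)
next
  case (Suc N)
  show ?case
  proof (cases "l = []")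
    case True
    then show ?thesis by (simp add: budget_potential_def)
  next
    case False
    let ?\<alpha> = "last_state h"
    let ?c = "\<lambda>act. ennreal (c (?\<alpha> ! fst act) (snd act))"
    let ?d = "\<lambda>act. measure_pmf (the (p (?\<alpha> ! fst act) (snd act)))"
    let ?h' = "\<lambda>act \<beta>. extend h act (replace_at ?\<alpha> (fst act) \<beta>)"
    let ?W = "budget_weight p c l"
    have ne: "?\<alpha> \<noteq> []"
      using False Suc.prems by auto
    have "budget_potential p c l \<le> ?c act
        + (\<integral>\<^sup>+ \<beta>. ETotalN p c \<sigma> N (?h' act \<beta>) + ?W * survival_prob p \<sigma> N (?h' act \<beta>) \<partial>?d act)"
      if act: "act \<in> set_pmf (\<sigma> h)" for act
    proof -
      obtain i a where act_eq: "act = (i, a)"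
        by (cases act)
      have i: "i < length l"
        using strategyD(1)[OF assms(1) ne act] Suc.prems act_eq by (metis fst_conv length_map)
      then have q: "fst (l ! i) = ?\<alpha> ! i"
        using Suc.prems by (metis nth_map)
      obtain d where d: "p (fst (l ! i)) a = Some d"
        using strategyD(2)[OF assms(1) ne act] q act_eq by auto
      have "budget_potential p c l \<le> ennreal (c (fst (l ! i)) a)
          + (\<integral>\<^sup>+ \<beta>. budget_potential p c (relabel l i \<beta>) \<partial>measure_pmf d)"
        using budget_potential_step[OF i, of a] d by (simp add: enabled_def)
      also have "\<dots> \<le> ennreal (c (fst (l ! i)) a)
          + (\<integral>\<^sup>+ \<beta>. ETotalN p c \<sigma> N (?h' act \<beta>) + ?W * survival_prob p \<sigma> N (?h' act \<beta>)
              \<partial>measure_pmf d)"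
      proof (intro add_left_mono nn_integral_mono_AE AE_pmfI)
        fix \<beta>
        assume \<beta>: "\<beta> \<in> set_pmf d"
        have "map fst (relabel l i \<beta>) = last_state (?h' act \<beta>)"
          using Suc.prems by (simp add: map_fst_relabel act_eq)
        then have "budget_potential p c (relabel l i \<beta>)
            \<le> ETotalN p c \<sigma> N (?h' act \<beta>)
              + budget_weight p c (relabel l i \<beta>) * survival_prob p \<sigma> N (?h' act \<beta>)"
          by (rule Suc.IH)
        also have "\<dots> \<le> ETotalN p c \<sigma> N (?h' act \<beta>) + ?W * survival_prob p \<sigma> N (?h' act \<beta>)"
          using budget_weight_step[OF i d \<beta>] by (intro add_left_mono mult_right_mono) auto
        finally show "budget_potential p c (relabel l i \<beta>)
            \<le> ETotalN p c \<sigma> N (?h' act \<beta>) + ?W * survival_prob p \<sigma> N (?h' act \<beta>)" .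
      qed
      finally show ?thesis
        using q d act_eq by simp
    qed
    then have "budget_potential p c l \<le> (\<integral>\<^sup>+ act. ?c act
        + (\<integral>\<^sup>+ \<beta>. ETotalN p c \<sigma> N (?h' act \<beta>) + ?W * survival_prob p \<sigma> N (?h' act \<beta>) \<partial>?d act)
        \<partial>measure_pmf (\<sigma> h))"
      by (intro measure_pmf.nn_integral_ge_const AE_pmfI)
    also have "\<dots> = ETotalN p c \<sigma> (Suc N) h + ?W * survival_prob p \<sigma> (Suc N) h"
      using ne by (simp add: nn_integral_add nn_integral_cmult add.assoc)
    finally show ?thesis .
  qed
qed

lemma min_cost_pos:
  obtains \<kappa> where "0 < \<kappa>" "\<And>q a. p q a \<noteq> None \<Longrightarrow> \<kappa> \<le> c q a"
proof -
  define C where "C = (\<lambda>(q, a). c q a) ` {(q, a). p q a \<noteq> None}"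
  obtain a where "a \<in> enabled p undefined"
    using enabled_nonempty by blast
  then have "finite C" "C \<noteq> {}"
    by (auto simp: C_def enabled_def)
  moreover have "\<forall>x\<in>C. 0 < x"
    using bmdp by (auto simp: C_def bmdp_def)
  ultimately show thesis
    by (intro that[of "Min C"]) (auto simp: C_def intro!: Min_le)
qed

lemma value_iter_le_ETotal_strat:
  assumes "strategy p \<sigma>"
  shows "value_iter p c k q \<le> ETotal_strat p c [q] \<sigma>"
proof -
  obtain \<kappa> where \<kappa>: "0 < \<kappa>" "\<And>q a. p q a \<noteq> None \<Longrightarrow> \<kappa> \<le> c q a"
    using min_cost_pos by blast
  let ?h = "([q], []) :: ('q, 'a) hist"
  show ?thesis
    unfolding ETotal_strat_eq_SUP
  proof (rule ennreal_le_of_survival_vanishes[OF \<kappa>(1) level_weight_less_top])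
    fix N
    show "value_iter p c k q \<le> ETotalN p c \<sigma> N ?h + level_weight p c k * survival_prob p \<sigma> N ?h"
      using budget_potential_le_ETotalN[OF assms, of "[(q, k)]" ?h N]
      by (simp add: budget_potential_def budget_weight_def)
    show "ennreal \<kappa> * of_nat N * survival_prob p \<sigma> N ?h \<le> ETotalN p c \<sigma> N ?h"
      using \<kappa> by (intro ETotalN_ge_survival_prob[OF assms]) auto
    show "ETotalN p c \<sigma> N ?h \<le> (SUP N. ETotalN p c \<sigma> N ?h)"
      by (rule SUP_upper) simp
  qed
qed

lemma value_iter_le_cstar: "value_iter p c k \<le> cstar p c"
  by (auto simp: le_fun_def cstar_def ETotal_def intro!: INF_greatest value_iter_le_ETotal_strat)

lemma tendsto_value_iter_SUP: "(\<lambda>k. value_iter p c k q) \<longlonglongrightarrow> (SUP k. value_iter p c k q)"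
  using incseq_value_iter by (intro LIMSEQ_SUP) (auto simp: incseq_def le_fun_def)

lemma Fop_SUP_value_iter:
  "Fop p c (\<lambda>q. SUP k. value_iter p c k q) = (\<lambda>q. SUP k. value_iter p c k q)"
proof
  fix q
  have "(\<lambda>k. value_iter p c (Suc k) q) \<longlonglongrightarrow> Fop p c (\<lambda>q. SUP k. value_iter p c k q) q"
    unfolding value_iter_Suc by (rule tendsto_Fop[OF tendsto_value_iter_SUP])
  then show "Fop p c (\<lambda>q. SUP k. value_iter p c k q) q = (SUP k. value_iter p c k q)"
    using LIMSEQ_Suc[OF tendsto_value_iter_SUP] by (rule LIMSEQ_unique)
qed

lemma cstar_eq_SUP_value_iter: "cstar p c = (\<lambda>q. SUP k. value_iter p c k q)"
proof (rule antisym)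
  show "cstar p c \<le> (\<lambda>q. SUP k. value_iter p c k q)"
    by (rule cstar_le_prefixpoint) (simp add: Fop_SUP_value_iter)
  show "(\<lambda>q. SUP k. value_iter p c k q) \<le> cstar p c"
    using value_iter_le_cstar by (auto simp: le_fun_def intro!: SUP_least)
qed

end

theorem theorem1:
  fixes p :: "'q::finite \<Rightarrow> 'a::finite \<Rightarrow> 'q list pmf option"
    and c :: "'q \<Rightarrow> 'a \<Rightarrow> real"
  assumes "bmdp p c"
  defines "F \<equiv> Fop p c"
      and "xs \<equiv> (\<lambda>k. (Fop p c ^^ k) (\<lambda>_. 0))"
  shows "(\<forall>x y. x \<le> y \<longrightarrow> F x \<le> F y)
       \<and> (\<forall>Y L. incseq Y \<longrightarrow> (\<forall>q. (\<lambda>k. Y k q) \<longlonglongrightarrow> L q)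
              \<longrightarrow> (\<forall>q. (\<lambda>k. F (Y k) q) \<longlonglongrightarrow> F L q))
       \<and> (\<forall>k. (\<lambda>_. 0) \<le> xs k \<and> xs k \<le> xs (Suc k))
       \<and> cstar p c = F (cstar p c)
       \<and> (\<forall>k. xs k \<le> cstar p c)
       \<and> (\<forall>c'. c' = F c' \<longrightarrow> cstar p c \<le> c')
       \<and> (\<forall>q. (\<lambda>k. xs k q) \<longlonglongrightarrow> cstar p c q)"
proof -
  have xs: "xs = value_iter p c"
    by (simp add: xs_def value_iter_def fun_eq_iff)
  have cstar: "cstar p c = (\<lambda>q. SUP k. value_iter p c k q)"
    by (rule cstar_eq_SUP_value_iter[OF assms(1)])
  show ?thesis
    unfolding F_def xs
  proof (intro conjI allI impI)
    show "Fop p c x \<le> Fop p c y" if "x \<le> y" for x y :: "'q \<Rightarrow> ennreal"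
      using Fop_mono[OF assms(1) that] .
    show "(\<lambda>k. Fop p c (Y k) q) \<longlonglongrightarrow> Fop p c L q" if "\<forall>q. (\<lambda>k. Y k q) \<longlonglongrightarrow> L q" for Y L q
      using tendsto_Fop[OF assms(1)] that by blast
    show "(\<lambda>_. 0) \<le> value_iter p c k" "value_iter p c k \<le> value_iter p c (Suc k)" for k
      using incseq_value_iter[OF assms(1)] by (auto simp: le_fun_def incseq_Suc_iff)
    show "cstar p c = Fop p c (cstar p c)"
      unfolding cstar by (simp add: Fop_SUP_value_iter[OF assms(1)])
    show "value_iter p c k \<le> cstar p c" for k
      by (rule value_iter_le_cstar[OF assms(1)])
    show "cstar p c \<le> c'" if "c' = Fop p c c'" for c'
      using cstar_le_prefixpoint[OF assms(1)] that by simp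
    show "(\<lambda>k. value_iter p c k q) \<longlonglongrightarrow> cstar p c q" for q
      unfolding cstar by (rule tendsto_value_iter_SUP[OF assms(1)])
  qed
qed

end
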